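(* Let $P$ be a poset and $v$ an assignment of variables to elements of $P$. Then for all $m,n\in\omega$, $P,v\models\phi_{mn}(x_1,\ldots,x_m,y)$ if and only if $\exists$ has an $n$-strategy for the game with starting position $(\{v(x_1),\ldots,v(x_m)\},\{v(y)\})$.
   Context: Work in the first-order signature with one binary relation $\leq$. Let $J(x,y,z)$ be the formula $x\leq z\wedge y\leq z\wedge\forall w((x\leq w\wedge y\leq w)\to z\leq w)$ (so $z$ is the join of $x,y$), and $M(x,y,z)$ the dual formula expressing that $z$ is the meet of $x,y$. For $k\in\omega$ let $C_k(x_1,\ldots,x_k,y)$ be $\bigvee_{i=1}^k(y=x_i)$ (false when $k=0$) and $D_k=\neg C_k$. Write $\vec{x}_m=(x_1,\ldots,x_m)$. Define formulas $\phi_{mn}(\vec{x}_m,y)$ recursively: $\phi_{m0}(\vec{x}_m,y)=D_m(\vec{x}_m,y)$, and $\phi_{m(n+1)}(\vec{x}_m,y)=\forall a\forall b\forall c\Big(\big(\exists d(C_m(\vec{x}_m,d)\wedge d\leq a)\to\phi_{(m+1)n}(\vec{x}_m,a,y)\big)\wedge\big((C_m(\vec{x}_m,a)\wedge C_m(\vec{x}_m,b)\wedge M(a,b,c))\to\phi_{(m+1)n}(\vec{x}_m,c,y)\big)\wedge\big((C_m(\vec{x}_m,c)\wedge J(a,b,c))\to(\phi_{(m+1)n}(\vec{x}_m,a,y)\vee\phi_{(m+1)n}(\vec{x}_m,b,y))\big)\Big)$. The game: for a poset $P$ and $U_0,V\subseteq P$, the game with starting position $(U_0,V)$ is played between $\forall$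 and $\exists$ in rounds $0,1,2,\ldots$; a set $U$ is maintained, initially $U_0$, with $V$ fixed. Each round $\forall$ moves and $\exists$ responds: (1) if $b\geq a$ for some $a\in U$, $\forall$ may play $(b)$ and $\exists$ must add $b$ to $U$; (2) if $a,b\in U$ and $a\wedge b$ exists, $\forall$ may play $(a,b)$ and $\exists$ must add $a\wedge b$ to $U$; (3) if $a\vee b$ exists and lies in $U$, $\forall$ may play $(a,b)$ and $\exists$ must choose one of $a,b$ and add it to $U$. $\forall$ wins in round $n$ if $U\cap V\neq\emptyset$ at the beginning of round $n$. $\exists$ has an $n$-strategy if she can guarantee that $\forall$ does not win until at least round $n+1$, however $\forall$ plays. *)

theory Defs
  imports Main
begin

datatype var = X nat | Y

definition is_join :: "'a::order \<Rightarrow> 'a \<Rightarrow> 'a \<Rightarrow> bool" where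
  "is_join x y z \<longleftrightarrow> x \<le> z \<and> y \<le> z \<and> (\<forall>w. (x \<le> w \<and> y \<le> w) \<longrightarrow> z \<le> w)"

definition is_meet :: "'a::order \<Rightarrow> 'a \<Rightarrow> 'a \<Rightarrow> bool" where
  "is_meet x y z \<longleftrightarrow> z \<le> x \<and> z \<le> y \<and> (\<forall>w. (w \<le> x \<and> w \<le> y) \<longrightarrow> w \<le> z)"

text \<open>C_k(x_1,...,x_k, t) under assignment v, where t is the value of the last argument.\<close>
definition C_sem :: "nat \<Rightarrow> (var \<Rightarrow> 'a) \<Rightarrow> 'a \<Rightarrow> bool" where
  "C_sem k v t \<longleftrightarrow> (\<exists>i\<in>{1..k}. t = v (X i))"

text \<open>Tarskian truth of phi_{mn}(x_1,...,x_m,y) in the poset under assignment v.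
  In the recursion, phi_{(m+1)n}(x_1..x_m, a, y) is evaluated by assigning a to x_{m+1}.\<close>
fun sat_phi :: "nat \<Rightarrow> nat \<Rightarrow> (var \<Rightarrow> 'a::order) \<Rightarrow> bool" where
  "sat_phi m 0 v = (\<not> C_sem m v (v Y))"
| "sat_phi m (Suc n) v =
    (\<forall>a b c.
       ((\<exists>d. C_sem m v d \<and> d \<le> a) \<longrightarrow> sat_phi (Suc m) n (v(X (Suc m) := a)))
     \<and> ((C_sem m v a \<and> C_sem m v b \<and> is_meet a b c) \<longrightarrow> sat_phi (Suc m) n (v(X (Suc m) := c)))
     \<and> ((C_sem m v c \<and> is_join a b c) \<longrightarrow>
          (sat_phi (Suc m) n (v(X (Suc m) := a)) \<or> sat_phi (Suc m) n (v(X (Suc m) := b)))))"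

text \<open>exists_strategy n U V: in the game with current position (U,V), player \<exists> can guarantee
  that \<forall> does not win at the beginning of any of the next rounds 0..n
  (i.e. \<exists> has an n-strategy).\<close>
fun exists_strategy :: "nat \<Rightarrow> 'a::order set \<Rightarrow> 'a set \<Rightarrow> bool" where
  "exists_strategy 0 U V = (U \<inter> V = {})"
| "exists_strategy (Suc n) U V =
    (U \<inter> V = {}
     \<and> (\<forall>a b. a \<in> U \<and> a \<le> b \<longrightarrow> exists_strategy n (insert b U) V)
     \<and> (\<forall>a b c. a \<in> U \<and> b \<in> U \<and> is_meet a b c \<longrightarrow> exists_strategy n (insert c U) V)
     \<and> (\<forall>a b c. is_join a b c \<and> c \<in> U \<longrightarrow>
          (exists_strategy n (insert a U) V \<or> exists_strategy n (insert b U) V)))"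

end

theory Submission
  imports Defs
begin

text \<open>Induction on n: the three conjuncts of phi_{m(n+1)} are exactly the three kinds of
  moves of \<forall>, the fresh variable x_{m+1} naming the element that \<exists> adds to U. The only part of
  an (n+1)-strategy not visible in phi_{m(n+1)} is that y is not yet in U. It is implied anyway:
  if y were some x_i, the upward move to y itself would lead to phi_{(m+1)n} with y again among
  the x's, and so on down to phi_{(m+n+1)0}, which says precisely that y is not among them.\<close>

definition x_values :: "nat \<Rightarrow> (var \<Rightarrow> 'a) \<Rightarrow> 'a set" where
  "x_values m v = (\<lambda>i. v (X i)) ` {1..m}"

lemma C_sem_iff_mem_x_values: "C_sem m v t \<longleftrightarrow> t \<in> x_values m v"
  unfolding C_sem_def x_values_def by auto

lemma x_values_fun_upd:
  "x_values (Suc m) (v(X (Suc m) := a)) = insert a (x_values m v)"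
proof -
  have "{1..Suc m} = insert (Suc m) {1..m}"
    by (simp add: atLeastAtMostSuc_conv)
  then show ?thesis
    unfolding x_values_def by (auto intro!: image_cong)
qed

lemma sat_phi_imp_y_notin_x_values:
  "sat_phi m n v \<Longrightarrow> v Y \<notin> x_values m v"
proof (induction n arbitrary: m v)
  case 0
  then show ?case by (simp add: C_sem_iff_mem_x_values)
next
  case (Suc n)
  show ?case
  proof
    assume "v Y \<in> x_values m v"
    then have "sat_phi (Suc m) n (v(X (Suc m) := v Y))"
      using Suc.prems by (auto simp: C_sem_iff_mem_x_values)
    from Suc.IH[OF this] show False
      unfolding x_values_fun_upd by simp
  qed
qed

lemma sat_phi_iff_exists_strategy:
  "sat_phi m n v \<longleftrightarrow> exists_strategy n (x_values m v) {v Y}"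
proof (induction n arbitrary: m v)
  case 0
  then show ?case by (simp add: C_sem_iff_mem_x_values)
next
  case (Suc n)
  have moves: "sat_phi (Suc m) n (v(X (Suc m) := a)) \<longleftrightarrow>
      exists_strategy n (insert a (x_values m v)) {v Y}" for a
    using Suc.IH[of "Suc m" "v(X (Suc m) := a)"]
    unfolding x_values_fun_upd fun_upd_other[OF var.distinct(2)] .
  show ?case
  proof
    assume sat: "sat_phi m (Suc n) v"
    have "v Y \<notin> x_values m v"
      using sat by (rule sat_phi_imp_y_notin_x_values)
    with sat show "exists_strategy (Suc n) (x_values m v) {v Y}"
      unfolding sat_phi.simps exists_strategy.simps C_sem_iff_mem_x_values moves by blast
  next
    assume "exists_strategy (Suc n) (x_values m v) {v Y}"
    then show "sat_phi m (Suc n) v"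
      unfolding sat_phi.simps exists_strategy.simps C_sem_iff_mem_x_values moves by blast
  qed
qed

theorem lemma4p1:
  fixes v :: "var \<Rightarrow> 'a::order" and m n :: nat
  shows "sat_phi m n v \<longleftrightarrow> exists_strategy n {v (X i) | i. i \<in> {1..m}} {v Y}"
  using sat_phi_iff_exists_strategy unfolding x_values_def Setcompr_eq_image .

end
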